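(* Let $G$ be a second countable locally compact group and $\Omega\subseteq G\times G$ a set invariant under all maps $(s,t)\mapsto(sr,tr)$, $r\in G$. Then $\Omega$ is marginally equivalent to an $\omega$-closed set if and only if it is marginally equivalent to a topologically closed set.
   Context: $G$ carries left Haar measure. A set $\Omega\subseteq G\times G$ is marginally null if $\Omega\subseteq(X\times G)\cup(G\times X)$ for some Haar-null $X\subseteq G$; two sets are marginally equivalent if their symmetric difference is marginally null. A set is $\omega$-open if it is marginally equivalent to a countable union of Borel rectangles $A\times B$, and $\omega$-closed if its complement is $\omega$-open. *)

theory Defs
  imports "HOL-Analysis.Analysis"
begin

text \<open>The group G is a type of class group_add (written additively; NOT assumed
commutative), carrying a Hausdorff second countable topology.\<close>

definition topological_group :: "'a::{group_add,topological_space} itself \<Rightarrow> bool" where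
  "topological_group _ \<longleftrightarrow>
     continuous_on UNIV (\<lambda>p::'a \<times> 'a. fst p + snd p) \<and> continuous_on UNIV (uminus :: 'a \<Rightarrow> 'a)"

definition locally_compact_group :: "'a::{group_add,topological_space} itself \<Rightarrow> bool" where
  "locally_compact_group T \<longleftrightarrow> topological_group T \<and>
     (\<forall>x::'a. \<exists>U K. open U \<and> compact K \<and> x \<in> U \<and> U \<subseteq> K)"

definition left_haar_measure :: "'a::{group_add,topological_space} measure \<Rightarrow> bool" where
  "left_haar_measure \<mu> \<longleftrightarrow> sets \<mu> = sets borel \<and>
     (\<forall>g A. A \<in> sets borel \<longrightarrow> emeasure \<mu> ((\<lambda>x. g + x) ` A) = emeasure \<mu> A) \<and>
     (\<forall>K. compact K \<longrightarrow> emeasure \<mu> K < \<infinity>) \<and>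
     (\<forall>U. open U \<and> U \<noteq> {} \<longrightarrow> emeasure \<mu> U > 0)"

definition haar_null :: "'a measure \<Rightarrow> 'a set \<Rightarrow> bool" where
  "haar_null \<mu> X \<longleftrightarrow> (\<exists>N \<in> sets \<mu>. X \<subseteq> N \<and> emeasure \<mu> N = 0)"

definition marginally_null :: "'a measure \<Rightarrow> ('a \<times> 'a) set \<Rightarrow> bool" where
  "marginally_null \<mu> \<Omega> \<longleftrightarrow> (\<exists>X. haar_null \<mu> X \<and> \<Omega> \<subseteq> (X \<times> UNIV) \<union> (UNIV \<times> X))"

definition marg_equiv :: "'a measure \<Rightarrow> ('a \<times> 'a) set \<Rightarrow> ('a \<times> 'a) set \<Rightarrow> bool" where
  "marg_equiv \<mu> \<Omega> \<Omega>' \<longleftrightarrow> marginally_null \<mu> ((\<Omega> - \<Omega>') \<union> (\<Omega>' - \<Omega>))"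

definition omega_open :: "'a::topological_space measure \<Rightarrow> ('a \<times> 'a) set \<Rightarrow> bool" where
  "omega_open \<mu> \<Omega> \<longleftrightarrow> (\<exists>A B :: nat \<Rightarrow> 'a set.
     (\<forall>n. A n \<in> sets borel \<and> B n \<in> sets borel) \<and> marg_equiv \<mu> \<Omega> (\<Union>n. A n \<times> B n))"

definition omega_closed :: "'a::topological_space measure \<Rightarrow> ('a \<times> 'a) set \<Rightarrow> bool" where
  "omega_closed \<mu> \<Omega> \<longleftrightarrow> omega_open \<mu> (- \<Omega>)"

end

(*
  An invariant \<Omega> is the preimage of D = {x. (x, 0) \<in> \<Omega>} under (s, t) \<mapsto> s - t. If \<Omega> is
  marginally equivalent to an \<omega>-closed set, then off a Haar-null set N the pairs (x + b, b) with
  x \<notin> D are exactly those lying in countably many Borel rectangles A n \<times> B n. For x \<notin> D some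
  slice A n \<inter> (x + B n) therefore has positive measure; by Steinhaus' theorem it meets its
  translate by every y in a neighbourhood W of 0, and a common point outside N and its
  translates shows y + x \<notin> D. Hence D and \<Omega> are closed. Conversely, the complement of a closed
  set is a countable union of basic open rectangles.

  Steinhaus' theorem rests on inner and outer approximation of Haar measure on compact sets,
  obtained from closed/open regularity of finite Borel measures on spaces whose open sets are
  countable unions of closed (here: compact) sets.
*)

theory Submission
  imports Defs
begin

lemma (in finite_measure) measure_UN_diff_initial_segment_less:
  fixes F :: "nat \<Rightarrow> 'a set"
  assumes F: "range F \<subseteq> sets M" and e: "e > 0"
  obtains k where "measure M ((\<Union>n. F n) - (\<Union>i\<le>k. F i)) < e"
proof -
  have "(\<Union>k. \<Union>i\<le>k. F i) = (\<Union>n. F n)" by auto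
  moreover have "(\<lambda>k. measure M (\<Union>i\<le>k. F i)) \<longlonglongrightarrow> measure M (\<Union>k. \<Union>i\<le>k. F i)"
    using F by (intro finite_Lim_measure_incseq) (auto simp: incseq_def intro: order_trans)
  ultimately have "\<forall>\<^sub>F k in sequentially. measure M (\<Union>n. F n) - e < measure M (\<Union>i\<le>k. F i)"
    using e by (intro order_tendstoD) auto
  then obtain k where k: "measure M (\<Union>n. F n) - e < measure M (\<Union>i\<le>k. F i)"
    by (auto simp: eventually_sequentially)
  have "measure M ((\<Union>n. F n) - (\<Union>i\<le>k. F i)) = measure M (\<Union>n. F n) - measure M (\<Union>i\<le>k. F i)"
    using F by (intro finite_measure_Diff) auto
  with k show thesis by (intro that[of k]) linarith
qed

definition closed_open_regular :: "'a::topological_space measure \<Rightarrow> 'a set \<Rightarrow> bool" where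
  "closed_open_regular M S \<longleftrightarrow>
     (\<forall>e>0. \<exists>F U. closed F \<and> open U \<and> F \<subseteq> S \<and> S \<subseteq> U \<and> measure M (U - F) < e)"

locale finite_borel_measure = finite_measure M for M :: "'a::topological_space measure" +
  assumes sets_eq_borel[simp]: "sets M = sets borel"
    and open_fsigma: "open (V :: 'a set) \<Longrightarrow> \<exists>F :: nat \<Rightarrow> 'a set. (\<forall>n. closed (F n)) \<and> V = (\<Union>n. F n)"
begin

lemma closed_open_approx_by_closed_UN:
  fixes F :: "nat \<Rightarrow> 'a set"
  assumes F: "\<And>n. closed (F n)" "(\<Union>n. F n) \<subseteq> S" and U: "open U" "S \<subseteq> U"
    and small: "measure M (U - (\<Union>n. F n)) < e"
  shows "\<exists>F' U'. closed F' \<and> open U' \<and> F' \<subseteq> S \<and> S \<subseteq> U' \<and> measure M (U' - F') < e"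
proof -
  have "range F \<subseteq> sets M" using F(1) by (auto intro: borel_closed)
  moreover have "e - measure M (U - (\<Union>n. F n)) > 0" using small by simp
  ultimately obtain k
    where k: "measure M ((\<Union>n. F n) - (\<Union>i\<le>k. F i)) < e - measure M (U - (\<Union>n. F n))"
    by (rule measure_UN_diff_initial_segment_less)
  have "measure M (U - (\<Union>i\<le>k. F i)) \<le> measure M ((U - (\<Union>n. F n)) \<union> ((\<Union>n. F n) - (\<Union>i\<le>k. F i)))"
    using F(1) U(1) by (intro finite_measure_mono) auto
  also have "\<dots> \<le> measure M (U - (\<Union>n. F n)) + measure M ((\<Union>n. F n) - (\<Union>i\<le>k. F i))"
    using F(1) U(1) by (intro measure_Un_le) auto
  finally have "measure M (U - (\<Union>i\<le>k. F i)) < e" using k by linarith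
  moreover have "closed (\<Union>i\<le>k. F i)" "(\<Union>i\<le>k. F i) \<subseteq> S" using F by auto
  ultimately show ?thesis using U by blast
qed

lemma closed_open_regular_open:
  assumes "open V"
  shows "closed_open_regular M V"
  unfolding closed_open_regular_def
proof (intro allI impI)
  fix e :: real assume "e > 0"
  obtain F :: "nat \<Rightarrow> 'a set" where F: "\<And>n. closed (F n)" "V = (\<Union>n. F n)"
    using open_fsigma[OF assms] by metis
  have small: "measure M (V - (\<Union>n. F n)) < e" using \<open>e > 0\<close> by (simp add: F(2)[symmetric])
  show "\<exists>F' U. closed F' \<and> open U \<and> F' \<subseteq> V \<and> V \<subseteq> U \<and> measure M (U - F') < e"
    by (rule closed_open_approx_by_closed_UN[OF F(1) _ assms order_refl small]) (simp add: F(2))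
qed

lemma closed_open_regular_Compl:
  assumes "closed_open_regular M S"
  shows "closed_open_regular M (- S)"
  unfolding closed_open_regular_def
proof (intro allI impI)
  fix e :: real assume "e > 0"
  with assms obtain F U where FU: "closed F" "open U" "F \<subseteq> S" "S \<subseteq> U" "measure M (U - F) < e"
    unfolding closed_open_regular_def by meson
  have "closed (- U)" "open (- F)" "- U \<subseteq> - S" "- S \<subseteq> - F" using FU(1-4) by auto
  moreover have "measure M (- F - - U) < e" using FU(5) by (simp add: Diff_eq Int_commute)
  ultimately show "\<exists>F' U'. closed F' \<and> open U' \<and> F' \<subseteq> - S \<and> - S \<subseteq> U' \<and> measure M (U' - F') < e"
    by (intro exI[of _ "- U"] exI[of _ "- F"] conjI)
qed

lemma measure_UN_diff_UN_le_suminf: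
  assumes "\<And>i. U i - F i \<in> sets M" and "summable (\<lambda>i. measure M (U i - F i))"
  shows "measure M ((\<Union>i. U i) - (\<Union>i. F i)) \<le> (\<Sum>i. measure M (U i - F i))"
proof -
  have "measure M ((\<Union>i. U i) - (\<Union>i. F i)) \<le> measure M (\<Union>i. U i - F i)"
    using assms(1) by (intro finite_measure_mono) auto
  also have "\<dots> \<le> (\<Sum>i. measure M (U i - F i))"
    using assms by (intro finite_measure_subadditive_countably) auto
  finally show ?thesis .
qed

lemma closed_open_regular_UN:
  fixes A :: "nat \<Rightarrow> 'a set"
  assumes "\<And>i. closed_open_regular M (A i)"
  shows "closed_open_regular M (\<Union>i. A i)"
  unfolding closed_open_regular_def
proof (intro allI impI)
  fix e :: real assume "e > 0"
  define d where "d = (\<lambda>i::nat. e * (1 / 2) ^ i / 4)"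
  have d: "d sums (e / 2)"
    using sums_mult[OF geometric_sums[of "1/2 :: real"], of "e / 4"] by (simp add: d_def)
  have "d i > 0" for i using \<open>e > 0\<close> by (simp add: d_def)
  then have "\<forall>i. \<exists>F U. closed F \<and> open U \<and> F \<subseteq> A i \<and> A i \<subseteq> U \<and> measure M (U - F) < d i"
    using assms unfolding closed_open_regular_def by blast
  then obtain F U where FU: "\<And>i. closed (F i)" "\<And>i. open (U i)" "\<And>i. F i \<subseteq> A i" "\<And>i. A i \<subseteq> U i"
    and small: "\<And>i. measure M (U i - F i) < d i"
    by metis
  have summable: "summable (\<lambda>i. measure M (U i - F i))"
    by (rule summable_comparison_test[OF _ sums_summable[OF d]]) (use small in \<open>auto intro: less_imp_le\<close>)
  have "measure M ((\<Union>i. U i) - (\<Union>i. F i)) \<le> (\<Sum>i. measure M (U i - F i))"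
    using FU summable by (intro measure_UN_diff_UN_le_suminf) auto
  also have "\<dots> \<le> (\<Sum>i. d i)"
    by (rule suminf_le[OF _ summable sums_summable[OF d]]) (use small in \<open>auto intro: less_imp_le\<close>)
  also have "\<dots> < e" using d \<open>e > 0\<close> by (simp add: sums_iff)
  finally have "measure M ((\<Union>i. U i) - (\<Union>i. F i)) < e" .
  moreover have "(\<Union>i. F i) \<subseteq> (\<Union>i. A i)" "(\<Union>i. A i) \<subseteq> (\<Union>i. U i)" using FU(3,4) by blast+
  ultimately show "\<exists>F' U'. closed F' \<and> open U' \<and> F' \<subseteq> (\<Union>i. A i) \<and> (\<Union>i. A i) \<subseteq> U'
      \<and> measure M (U' - F') < e"
    using FU(1,2) by (intro closed_open_approx_by_closed_UN) auto
qed

lemma closed_open_regular_borel: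
  assumes "S \<in> sets borel"
  shows "closed_open_regular M S"
proof -
  have "S \<in> sigma_sets UNIV (Collect open)" using assms by (simp add: sets_borel)
  then show ?thesis
  proof (induction rule: sigma_sets.induct)
    case (Basic a)
    then show ?case by (simp add: closed_open_regular_open)
  next
    case Empty
    show ?case by (simp add: closed_open_regular_open)
  next
    case (Compl a)
    then show ?case using closed_open_regular_Compl by (simp add: Compl_eq_Diff_UNIV)
  next
    case (Union A)
    from Union.IH show ?case by (rule closed_open_regular_UN)
  qed
qed

end

lemma haar_null_iff_subset_null_set: "haar_null \<mu> X \<longleftrightarrow> (\<exists>N \<in> null_sets \<mu>. X \<subseteq> N)"
  by (auto simp: haar_null_def null_sets_def)

lemma marginally_nullE:
  assumes "marginally_null \<mu> Z"
  obtains N where "N \<in> null_sets \<mu>" "\<And>s t. s \<notin> N \<Longrightarrow> t \<notin> N \<Longrightarrow> (s, t) \<notin> Z"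
  using assms unfolding marginally_null_def haar_null_iff_subset_null_set by blast

lemma marg_equivE:
  assumes "marg_equiv \<mu> \<Omega> \<Omega>'"
  obtains N where "N \<in> null_sets \<mu>" "\<And>s t. s \<notin> N \<Longrightarrow> t \<notin> N \<Longrightarrow> (s, t) \<in> \<Omega> \<longleftrightarrow> (s, t) \<in> \<Omega>'"
  using assms unfolding marg_equiv_def by (elim marginally_nullE) blast

lemma marg_equiv_refl: "marg_equiv \<mu> \<Omega> \<Omega>"
  unfolding marg_equiv_def marginally_null_def haar_null_iff_subset_null_set by blast

lemma omega_closed_marg_equivE:
  fixes \<mu> :: "'a::topological_space measure"
  assumes "omega_closed \<mu> \<Omega>'" and "marg_equiv \<mu> \<Omega> \<Omega>'"
  obtains N and A B :: "nat \<Rightarrow> 'a set"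
  where "N \<in> null_sets \<mu>" "\<And>n. A n \<in> sets borel" "\<And>n. B n \<in> sets borel"
    and "\<And>s t. s \<notin> N \<Longrightarrow> t \<notin> N \<Longrightarrow> (s, t) \<notin> \<Omega> \<longleftrightarrow> (\<exists>n. s \<in> A n \<and> t \<in> B n)"
proof -
  obtain A B :: "nat \<Rightarrow> 'a set" where AB: "\<And>n. A n \<in> sets borel" "\<And>n. B n \<in> sets borel"
    and equiv: "marg_equiv \<mu> (- \<Omega>') (\<Union>n. A n \<times> B n)"
    using assms(1) unfolding omega_closed_def omega_open_def by blast
  from equiv obtain N1 where N1: "N1 \<in> null_sets \<mu>"
    "\<And>s t. s \<notin> N1 \<Longrightarrow> t \<notin> N1 \<Longrightarrow> (s, t) \<in> - \<Omega>' \<longleftrightarrow> (s, t) \<in> (\<Union>n. A n \<times> B n)"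
    by (rule marg_equivE) (rule that)
  obtain N2 where N2: "N2 \<in> null_sets \<mu>"
    "\<And>s t. s \<notin> N2 \<Longrightarrow> t \<notin> N2 \<Longrightarrow> (s, t) \<in> \<Omega> \<longleftrightarrow> (s, t) \<in> \<Omega>'"
    using assms(2) by (rule marg_equivE) (rule that)
  show thesis
  proof (rule that[of "N1 \<union> N2" A B])
    show "N1 \<union> N2 \<in> null_sets \<mu>" using N1(1) N2(1) by (rule null_sets.Un)
  next
    fix s t assume "s \<notin> N1 \<union> N2" "t \<notin> N1 \<union> N2"
    then show "(s, t) \<notin> \<Omega> \<longleftrightarrow> (\<exists>n. s \<in> A n \<and> t \<in> B n)"
      using N1(2)[of s t] N2(2)[of s t] by simp
  qed (fact AB)+
qed

lemma open_eq_UN_open_rectangles: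
  fixes W :: "('a::second_countable_topology \<times> 'b::second_countable_topology) set"
  assumes "open W"
  obtains A :: "nat \<Rightarrow> 'a set" and B :: "nat \<Rightarrow> 'b set"
  where "\<And>n. open (A n)" "\<And>n. open (B n)" "W = (\<Union>n. A n \<times> B n)"
proof -
  obtain \<A> :: "'a set set" where \<A>: "countable \<A>" "topological_basis \<A>"
    using ex_countable_basis by blast
  obtain \<B> :: "'b set set" where \<B>: "countable \<B>" "topological_basis \<B>"
    using ex_countable_basis by blast
  define R where "R = insert ({}, {}) {(a, b) \<in> \<A> \<times> \<B>. a \<times> b \<subseteq> W}"
  have "countable (\<A> \<times> \<B>)" using \<A>(1) \<B>(1) by (rule countable_SIGMA)
  then have "countable R" unfolding R_def by (intro countable_insert) (rule countable_subset[rotated], auto)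
  have "W \<subseteq> (\<Union>r\<in>R. fst r \<times> snd r)"
  proof
    fix p assume "p \<in> W"
    then obtain U V where UV: "open U" "open V" "fst p \<in> U" "snd p \<in> V" "U \<times> V \<subseteq> W"
      using open_prod_elim[OF assms] by (metis mem_Times_iff)
    obtain a where "a \<in> \<A>" "fst p \<in> a" "a \<subseteq> U" by (rule topological_basisE[OF \<A>(2) UV(1,3)])
    moreover obtain b where "b \<in> \<B>" "snd p \<in> b" "b \<subseteq> V" by (rule topological_basisE[OF \<B>(2) UV(2,4)])
    ultimately have "(a, b) \<in> R" "p \<in> a \<times> b" using UV(5) by (auto simp: R_def mem_Times_iff)
    then show "p \<in> (\<Union>r\<in>R. fst r \<times> snd r)" by force
  qed
  moreover have "(\<Union>r\<in>R. fst r \<times> snd r) \<subseteq> W" by (auto simp: R_def)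
  ultimately have "W = (\<Union>r\<in>R. fst r \<times> snd r)" by (rule antisym)
  also have "\<dots> = (\<Union>n. fst (from_nat_into R n) \<times> snd (from_nat_into R n))"
    by (rule UN_from_nat_into[OF \<open>countable R\<close>]) (simp add: R_def)
  finally have W: "W = (\<Union>n. fst (from_nat_into R n) \<times> snd (from_nat_into R n))" .
  have R_open: "open (fst r) \<and> open (snd r)" if "r \<in> R" for r
    using that \<A>(2) \<B>(2) unfolding R_def by (auto intro: topological_basis_open)
  have "R \<noteq> {}" by (simp add: R_def)
  then have "open (fst (from_nat_into R n)) \<and> open (snd (from_nat_into R n))" for n
    by (intro R_open from_nat_into)
  then show thesis
    by (intro that[of "\<lambda>n. fst (from_nat_into R n)" "\<lambda>n. snd (from_nat_into R n)"] W) simp_all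
qed

lemma closed_imp_omega_closed:
  fixes \<Omega> :: "('a::second_countable_topology \<times> 'a) set"
  assumes "closed \<Omega>"
  shows "omega_closed \<mu> \<Omega>"
proof -
  have "open (- \<Omega>)" using assms by (rule open_Compl)
  then obtain A B :: "nat \<Rightarrow> 'a set"
    where AB: "\<And>n. open (A n)" "\<And>n. open (B n)" and eq: "- \<Omega> = (\<Union>n. A n \<times> B n)"
    by (rule open_eq_UN_open_rectangles) (rule that)
  show ?thesis
    unfolding omega_closed_def omega_open_def
    by (intro exI[of _ A] exI[of _ B] conjI allI borel_open AB) (simp add: eq marg_equiv_refl)
qed

lemma right_invariant_mem_iff:
  fixes \<Omega> :: "('a::group_add \<times> 'a) set"
  assumes "\<forall>r. (\<lambda>(s, t). (s + r, t + r)) ` \<Omega> = \<Omega>"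
  shows "(x + b, b) \<in> \<Omega> \<longleftrightarrow> (x, 0) \<in> \<Omega>"
proof -
  have translate: "(s + r, t + r) \<in> \<Omega>" if "(s, t) \<in> \<Omega>" for s t r
  proof -
    have "(\<lambda>(s, t). (s + r, t + r)) (s, t) \<in> (\<lambda>(s, t). (s + r, t + r)) ` \<Omega>"
      using that by (rule imageI)
    then show ?thesis using assms by simp
  qed
  show ?thesis
  proof
    assume "(x + b, b) \<in> \<Omega>"
    from translate[OF this, of "- b"] show "(x, 0) \<in> \<Omega>" by (simp add: add.assoc)
  next
    assume "(x, 0) \<in> \<Omega>"
    from translate[OF this, of b] show "(x + b, b) \<in> \<Omega>" by simp
  qed
qed

locale lc_haar =
  fixes \<mu> :: "'a::{group_add, t2_space, second_countable_topology} measure"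
  assumes locally_compact: "locally_compact_group TYPE('a)"
    and haar: "left_haar_measure \<mu>"
begin

lemma sets_haar[simp, measurable_cong]: "sets \<mu> = sets borel"
  using haar by (simp add: left_haar_measure_def)

lemma space_haar[simp]: "space \<mu> = UNIV"
  by (metis sets_eq_imp_space_eq sets_haar space_borel)

lemma emeasure_translation: "A \<in> sets borel \<Longrightarrow> emeasure \<mu> ((\<lambda>x. g + x) ` A) = emeasure \<mu> A"
  using haar by (simp add: left_haar_measure_def)

lemma emeasure_compact_finite: "compact K \<Longrightarrow> emeasure \<mu> K < \<infinity>"
  using haar by (simp add: left_haar_measure_def)

lemma emeasure_open_pos: "open U \<Longrightarrow> U \<noteq> {} \<Longrightarrow> emeasure \<mu> U > 0"
  using haar by (simp add: left_haar_measure_def)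

lemma continuous_on_group_add:
  fixes f g :: "'b::topological_space \<Rightarrow> 'a"
  assumes "continuous_on UNIV f" "continuous_on UNIV g"
  shows "continuous_on UNIV (\<lambda>x. f x + g x)"
proof -
  have "continuous_on UNIV (\<lambda>p::'a \<times> 'a. fst p + snd p)"
    using locally_compact by (simp add: locally_compact_group_def topological_group_def)
  from continuous_on_compose2[OF this continuous_on_Pair[OF assms]] show ?thesis by simp
qed

lemma continuous_on_group_diff:
  fixes f g :: "'b::topological_space \<Rightarrow> 'a"
  assumes "continuous_on UNIV f" "continuous_on UNIV g"
  shows "continuous_on UNIV (\<lambda>x. f x - g x)"
proof -
  have "continuous_on UNIV (uminus :: 'a \<Rightarrow> 'a)"
    using locally_compact by (simp add: locally_compact_group_def topological_group_def)
  from continuous_on_compose2[OF this assms(2)] have "continuous_on UNIV (\<lambda>x. - g x)" by simp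
  from continuous_on_group_add[OF assms(1) this] show ?thesis by simp
qed

lemma translation_eq_vimage: "(\<lambda>x. g + x) ` A = (\<lambda>x. - g + x) -` (A :: 'a set)"
  by (auto simp: add.assoc[symmetric]) (metis add_minus_cancel imageI)

lemma translation_borel[measurable]: "A \<in> sets borel \<Longrightarrow> (\<lambda>x::'a. g + x) ` A \<in> sets borel"
  unfolding translation_eq_vimage
  by (intro measurable_sets_borel[OF borel_measurable_continuous_onI]
      continuous_on_group_add continuous_on_const continuous_on_id)

lemma translation_null_sets: "N \<in> null_sets \<mu> \<Longrightarrow> (\<lambda>x. g + x) ` N \<in> null_sets \<mu>"
  by (simp add: null_sets_def emeasure_translation translation_borel)

lemma compact_neighbourhood:
  assumes "open W" "x \<in> W"
  obtains U K where "open U" "compact K" "x \<in> U" "U \<subseteq> K" "K \<subseteq> (W :: 'a set)"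
proof -
  have "locally_compact_space (euclidean :: 'a topology)"
    using locally_compact
    by (simp add: locally_compact_group_def locally_compact_space_def compactin_euclidean_iff)
  moreover have "Hausdorff_space (euclidean :: 'a topology)"
    using hausdorff by (simp add: Hausdorff_space_def disjnt_def) blast
  ultimately have "neighbourhood_base_of (compactin euclidean) (euclidean :: 'a topology)"
    using locally_compact_space_neighbourhood_base by blast
  with assms show thesis
    unfolding neighbourhood_base_of by (metis open_openin compactin_euclidean_iff that)
qed

lemma open_eq_UN_compacts:
  assumes "open (V :: 'a set)"
  obtains K :: "nat \<Rightarrow> 'a set" where "\<And>n. compact (K n)" "V = (\<Union>n. K n)"
proof -
  have "\<forall>x\<in>V. \<exists>U C. open U \<and> compact C \<and> x \<in> U \<and> U \<subseteq> C \<and> C \<subseteq> V"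
    using compact_neighbourhood[OF assms] by metis
  then obtain U C where UC: "\<And>x. x \<in> V \<Longrightarrow> open (U x) \<and> compact (C x) \<and> x \<in> U x \<and> U x \<subseteq> C x \<and> C x \<subseteq> V"
    by metis
  obtain \<U> where "\<U> \<subseteq> U ` V" "countable \<U>" "\<Union>\<U> = \<Union>(U ` V)"
    using Lindelof[of "U ` V"] UC by blast
  then obtain X where X: "X \<subseteq> V" "countable X" "\<Union>(U ` X) = \<Union>(U ` V)"
    by (metis countable_subset_image)
  define \<K> where "\<K> = insert {} (C ` X)"
  have "countable \<K>" "\<K> \<noteq> {}" using X(2) by (auto simp: \<K>_def)
  then have \<K>: "range (from_nat_into \<K>) = \<K>" by simp
  have "V \<subseteq> \<Union>(C ` X)"
  proof
    fix x assume "x \<in> V"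
    then have "x \<in> \<Union>(U ` X)" using UC X(3) by blast
    then show "x \<in> \<Union>(C ` X)" using UC X(1) by blast
  qed
  then have "V = \<Union>\<K>" using UC X(1) by (auto simp: \<K>_def)
  moreover have "compact K" if "K \<in> \<K>" for K using that UC X(1) by (auto simp: \<K>_def)
  ultimately show thesis using \<K> by (intro that[of "from_nat_into \<K>"]) auto
qed

lemma compact_subset_open_finite_measure:
  assumes "compact K"
  obtains U where "open U" "K \<subseteq> U" "emeasure \<mu> U < \<infinity>"
proof -
  have "\<exists>U C. open U \<and> compact C \<and> x \<in> U \<and> U \<subseteq> C" for x :: 'a
    by (rule compact_neighbourhood[OF open_UNIV UNIV_I, of x]) blast
  then obtain U C :: "'a \<Rightarrow> 'a set"
    where UC: "\<And>x. open (U x) \<and> compact (C x) \<and> x \<in> U x \<and> U x \<subseteq> C x"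
    by metis
  obtain X :: "'a set" where X: "X \<subseteq> UNIV" "finite X" "K \<subseteq> (\<Union>x\<in>X. U x)"
    by (rule compactE_image[OF assms, of UNIV U]) (use UC in auto)
  have "compact (\<Union>x\<in>X. C x)" using UC X(2) by (intro compact_UN) auto
  then have "emeasure \<mu> (\<Union>x\<in>X. U x) \<le> emeasure \<mu> (\<Union>x\<in>X. C x)"
    using UC by (intro emeasure_mono) (auto intro: borel_closed compact_imp_closed)
  also have "\<dots> < \<infinity>" using \<open>compact (\<Union>x\<in>X. C x)\<close> by (rule emeasure_compact_finite)
  finally show thesis using UC X(3) by (intro that[of "\<Union>x\<in>X. U x"]) auto
qed

lemma finite_borel_measure_restrict:
  assumes "L \<in> sets borel" "emeasure \<mu> L < \<infinity>"
  shows "finite_borel_measure (density \<mu> (indicator L))"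
proof (rule finite_borel_measure.intro)
  show "finite_measure (density \<mu> (indicator L))"
    using assms by (intro finite_measureI) (simp add: emeasure_restricted)
  show "finite_borel_measure_axioms (density \<mu> (indicator L))"
  proof (rule finite_borel_measure_axioms.intro)
    fix V :: "'a set" assume "open V"
    then obtain K :: "nat \<Rightarrow> 'a set" where K: "\<And>n. compact (K n)" "V = (\<Union>n. K n)"
      by (rule open_eq_UN_compacts) (rule that)
    then show "\<exists>F :: nat \<Rightarrow> 'a set. (\<forall>n. closed (F n)) \<and> V = (\<Union>n. F n)"
      by (intro exI[of _ K]) (auto intro: compact_imp_closed)
  qed simp
qed

lemma closed_open_approx_within:
  assumes "L \<in> sets borel" "emeasure \<mu> L < \<infinity>" "S \<in> sets borel" "e > 0"
  obtains F U where "closed F" "open U" "F \<subseteq> S" "S \<subseteq> U" "emeasure \<mu> (L \<inter> (U - F)) < ennreal e"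
proof -
  interpret \<nu>: finite_borel_measure "density \<mu> (indicator L)"
    using assms(1,2) by (rule finite_borel_measure_restrict)
  obtain F U where FU: "closed F" "open U" "F \<subseteq> S" "S \<subseteq> U"
    and small: "measure (density \<mu> (indicator L)) (U - F) < e"
    using \<nu>.closed_open_regular_borel[OF assms(3)] assms(4) unfolding closed_open_regular_def by meson
  have "emeasure \<mu> (L \<inter> (U - F)) = ennreal (measure (density \<mu> (indicator L)) (U - F))"
    using FU(1,2) assms(1) by (simp add: \<nu>.emeasure_eq_measure[symmetric] emeasure_restricted)
  also have "\<dots> < ennreal e" using small assms(4) by (rule ennreal_lessI[rotated])
  finally show thesis using FU by (intro that)
qed

lemma compact_subset_pos_measure:
  assumes C: "C \<in> sets borel" and pos: "emeasure \<mu> C > 0"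
  obtains K where "compact K" "K \<subseteq> C" "emeasure \<mu> K > 0"
proof -
  obtain L :: "nat \<Rightarrow> 'a set" where L: "\<And>n. compact (L n)" "UNIV = (\<Union>n. L n)"
    using open_UNIV by (rule open_eq_UN_compacts) (rule that)
  have Lb: "L n \<in> sets borel" for n using L(1) by (intro borel_closed compact_imp_closed)
  have "\<exists>n. emeasure \<mu> (C \<inter> L n) \<noteq> 0"
  proof (rule ccontr)
    assume "\<nexists>n. emeasure \<mu> (C \<inter> L n) \<noteq> 0"
    then have "emeasure \<mu> (\<Union>n. C \<inter> L n) = 0"
      using C Lb by (intro emeasure_UN_eq_0) auto
    moreover have "(\<Union>n. C \<inter> L n) = C" using L(2) by blast
    ultimately show False using pos by simp
  qed
  then obtain n where n: "emeasure \<mu> (C \<inter> L n) \<noteq> 0" by blast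
  have Lfin: "emeasure \<mu> (L n) < \<infinity>" using L(1) by (rule emeasure_compact_finite)
  let ?S = "C \<inter> L n"
  have Sb: "?S \<in> sets borel" using C Lb by (rule sets.Int)
  have "emeasure \<mu> ?S \<le> emeasure \<mu> (L n)" using Lb by (intro emeasure_mono) auto
  then have Sfin: "emeasure \<mu> ?S \<noteq> \<infinity>" using Lfin by (auto simp: top_unique)
  have e: "enn2real (emeasure \<mu> ?S) > 0"
    using n Sfin by (simp add: enn2real_positive_iff less_top zero_less_iff_neq_zero)
  obtain F U where FU: "closed F" "open U" "F \<subseteq> ?S" "?S \<subseteq> U"
    and small: "emeasure \<mu> (L n \<inter> (U - F)) < ennreal (enn2real (emeasure \<mu> ?S))"
    by (rule closed_open_approx_within[OF Lb[of n] Lfin Sb e]) (rule that)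
  have Fb: "F \<in> sets borel" using FU(1) by (rule borel_closed)
  have "emeasure \<mu> ?S \<le> emeasure \<mu> (F \<union> (?S - F))" using Sb Fb by (intro emeasure_mono) auto
  also have "\<dots> \<le> emeasure \<mu> F + emeasure \<mu> (?S - F)" using Sb Fb by (intro emeasure_subadditive) auto
  finally have S_le: "emeasure \<mu> ?S \<le> emeasure \<mu> F + emeasure \<mu> (?S - F)" .
  have "emeasure \<mu> (?S - F) \<le> emeasure \<mu> (L n \<inter> (U - F))"
    using FU(2,4) Lb Fb by (intro emeasure_mono) auto
  also have "\<dots> < emeasure \<mu> ?S" using small Sfin by (simp add: less_top)
  finally have "emeasure \<mu> F \<noteq> 0" using S_le by auto
  moreover have "F \<subseteq> L n" using FU(3) by blast
  then have "compact F" using compact_Int_closed[OF L(1) FU(1), of n] by (simp add: Int_absorb1)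
  ultimately show thesis using FU(3) by (intro that[of F]) (auto simp: zero_less_iff_neq_zero)
qed

lemma open_superset_emeasure_less_double:
  assumes "compact K" "emeasure \<mu> K > 0"
  obtains U where "open U" "K \<subseteq> U" "emeasure \<mu> U < emeasure \<mu> K + emeasure \<mu> K"
proof -
  obtain V where V: "open V" "K \<subseteq> V" "emeasure \<mu> V < \<infinity>"
    by (rule compact_subset_open_finite_measure[OF assms(1)]) (rule that)
  have Vb: "V \<in> sets borel" using V(1) by (rule borel_open)
  have Kb: "K \<in> sets borel" using assms(1) by (intro borel_closed compact_imp_closed)
  have Kfin: "emeasure \<mu> K < \<infinity>" using assms(1) by (rule emeasure_compact_finite)
  have e: "enn2real (emeasure \<mu> K) > 0" using assms(2) Kfin by (simp add: enn2real_positive_iff)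
  obtain F U where FU: "closed F" "open U" "F \<subseteq> K" "K \<subseteq> U"
    and small: "emeasure \<mu> (V \<inter> (U - F)) < ennreal (enn2real (emeasure \<mu> K))"
    by (rule closed_open_approx_within[OF Vb V(3) Kb e]) (rule that)
  have UFb: "V \<inter> (U - F) \<in> sets borel" using Vb FU(1,2) by auto
  have "emeasure \<mu> (V \<inter> U) \<le> emeasure \<mu> (K \<union> (V \<inter> (U - F)))"
    using Kb UFb FU(3) by (intro emeasure_mono) auto
  also have "\<dots> \<le> emeasure \<mu> K + emeasure \<mu> (V \<inter> (U - F))"
    using Kb UFb by (intro emeasure_subadditive) auto
  also have "\<dots> < emeasure \<mu> K + emeasure \<mu> K"
    using small Kfin by (simp add: ennreal_add_left_cancel_less less_top)
  finally show thesis using V(1,2) FU(2,4) by (intro that[of "V \<inter> U"]) auto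
qed

lemma emeasure_Int_translation_pos:
  assumes "K \<in> sets borel" "U \<in> sets borel" "K \<subseteq> U" "(\<lambda>x. y + x) ` K \<subseteq> U"
    and "emeasure \<mu> U < emeasure \<mu> K + emeasure \<mu> K"
  shows "emeasure \<mu> (K \<inter> (\<lambda>x. y + x) ` K) > 0"
proof (rule ccontr)
  let ?K' = "(\<lambda>x. y + x) ` K"
  assume "\<not> emeasure \<mu> (K \<inter> ?K') > 0"
  then have null: "emeasure \<mu> (K \<inter> ?K') = 0" by simp
  have K'b: "?K' \<in> sets borel" using assms(1) by (rule translation_borel)
  have "emeasure \<mu> K + emeasure \<mu> K = emeasure \<mu> K + emeasure \<mu> ?K'"
    using assms(1) by (simp add: emeasure_translation)
  also have "\<dots> = emeasure \<mu> (K \<union> ?K') + emeasure \<mu> (K \<inter> ?K')"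
    using assms(1) K'b by (intro emeasure_Un_Int) auto
  also have "\<dots> = emeasure \<mu> (K \<union> ?K')" using null by simp
  also have "\<dots> \<le> emeasure \<mu> U" using assms(2-4) by (intro emeasure_mono) auto
  finally show False using assms(5) by simp
qed

lemma steinhaus:
  assumes C: "C \<in> sets borel" and pos: "emeasure \<mu> C > 0"
  obtains W where "open W" "0 \<in> W" "\<And>y. y \<in> W \<Longrightarrow> emeasure \<mu> (C \<inter> (\<lambda>x. y + x) ` C) > 0"
proof -
  obtain K where K: "compact K" "K \<subseteq> C" "emeasure \<mu> K > 0"
    by (rule compact_subset_pos_measure[OF C pos]) (rule that)
  have Kb: "K \<in> sets borel" using K(1) by (intro borel_closed compact_imp_closed)
  obtain U where U: "open U" "K \<subseteq> U" "emeasure \<mu> U < emeasure \<mu> K + emeasure \<mu> K"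
    by (rule open_superset_emeasure_less_double[OF K(1,3)]) (rule that)
  have "continuous_on UNIV (\<lambda>p::'a \<times> 'a. fst p + snd p)"
    by (intro continuous_on_group_add continuous_on_fst continuous_on_snd continuous_on_id)
  then have "open ((\<lambda>p. fst p + snd p) -` U)" by (rule open_vimage[OF U(1)])
  moreover have "{0} \<times> K \<subseteq> (\<lambda>p. fst p + snd p) -` U" using U(2) by auto
  ultimately have "\<exists>W. 0 \<in> W \<and> open W \<and> W \<times> K \<subseteq> (\<lambda>p. fst p + snd p) -` U"
    by (rule Elementary_Topology.tube_lemma[OF K(1)])
  then obtain W :: "'a set" where W: "0 \<in> W" "open W" "W \<times> K \<subseteq> (\<lambda>p. fst p + snd p) -` U"
    by blast
  show thesis
  proof (rule that[OF W(2,1)])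
    fix y assume "y \<in> W"
    then have "(\<lambda>x. y + x) ` K \<subseteq> U" using W(3) by auto
    then have "emeasure \<mu> (K \<inter> (\<lambda>x. y + x) ` K) > 0"
      using Kb U by (intro emeasure_Int_translation_pos) (auto intro: borel_open)
    also have "\<dots> \<le> emeasure \<mu> (C \<inter> (\<lambda>x. y + x) ` C)"
      using K(2) C by (intro emeasure_mono) (auto intro: translation_borel)
    finally show "emeasure \<mu> (C \<inter> (\<lambda>x. y + x) ` C) > 0" .
  qed
qed

context
  fixes N D :: "'a set" and A B :: "nat \<Rightarrow> 'a set"
  assumes N: "N \<in> null_sets \<mu>" and A: "\<And>n. A n \<in> sets borel" and B: "\<And>n. B n \<in> sets borel"
    and not_mem_iff: "\<And>x b. x + b \<notin> N \<Longrightarrow> b \<notin> N \<Longrightarrow> x \<notin> D \<longleftrightarrow> (\<exists>n. x + b \<in> A n \<and> b \<in> B n)"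
begin

lemma slice_emeasure_posE:
  assumes "x \<notin> D"
  obtains n where "emeasure \<mu> (A n \<inter> (\<lambda>z. x + z) ` B n) > 0"
proof -
  have "\<exists>n. emeasure \<mu> (A n \<inter> (\<lambda>z. x + z) ` B n) \<noteq> 0"
  proof (rule ccontr)
    assume "\<nexists>n. emeasure \<mu> (A n \<inter> (\<lambda>z. x + z) ` B n) \<noteq> 0"
    then have "A n \<inter> (\<lambda>z. x + z) ` B n \<in> null_sets \<mu>" for n
      using A B by (auto simp: null_sets_def translation_borel)
    then have null: "N \<union> (\<lambda>z. x + z) ` N \<union> (\<Union>n. A n \<inter> (\<lambda>z. x + z) ` B n) \<in> null_sets \<mu>"
      using N by (intro null_sets.Un null_sets_UN translation_null_sets)
    have "a \<in> N \<union> (\<lambda>z. x + z) ` N \<union> (\<Union>n. A n \<inter> (\<lambda>z. x + z) ` B n)" for a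
    proof -
      define b where "b = - x + a"
      have a: "a = x + b" by (simp add: b_def add.assoc[symmetric])
      show ?thesis
      proof (cases "a \<in> N \<or> b \<in> N")
        case False
        then obtain n where "x + b \<in> A n" "b \<in> B n" using not_mem_iff[of x b] assms a by auto
        then show ?thesis using a by blast
      qed (use a in blast)
    qed
    then have "UNIV \<in> null_sets \<mu>" using null by (metis null_sets_subset sets.top space_haar subsetI)
    moreover have "emeasure \<mu> UNIV > 0" by (rule emeasure_open_pos) auto
    ultimately show False by (simp add: null_sets_def)
  qed
  then show thesis using that by (auto simp: zero_less_iff_neq_zero)
qed

lemma translate_not_mem_if_slice_overlaps:
  fixes n :: nat and x y :: 'a
  defines "C \<equiv> A n \<inter> (\<lambda>z. x + z) ` B n"
  assumes "emeasure \<mu> (C \<inter> (\<lambda>w. y + w) ` C) > 0"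
  shows "y + x \<notin> D"
proof -
  have Cb: "C \<inter> (\<lambda>w. y + w) ` C \<in> sets borel"
    unfolding C_def using A B by (intro sets.Int translation_borel)
  have "N \<union> (\<lambda>w. (y + x) + w) ` N \<in> null_sets \<mu>" using N by (intro null_sets.Un translation_null_sets)
  then have "\<not> C \<inter> (\<lambda>w. y + w) ` C \<subseteq> N \<union> (\<lambda>w. (y + x) + w) ` N"
    using assms(2) Cb by (metis null_setsD1 null_sets_subset order_less_irrefl sets_haar)
  then obtain a where a: "a \<in> C" "a \<in> (\<lambda>w. y + w) ` C" "a \<notin> N" "a \<notin> (\<lambda>w. (y + x) + w) ` N"
    by blast
  then obtain b where b: "b \<in> B n" "a = (y + x) + b"
    unfolding C_def by (auto simp: add.assoc)
  then have "b \<notin> N" using a(4) by blast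
  moreover have "a \<in> A n" using a(1) unfolding C_def by blast
  ultimately show ?thesis using not_mem_iff[of "y + x" b] a(3) b by auto
qed

lemma closed_difference_set: "closed D"
  unfolding closed_def open_subopen[of "- D"]
proof
  fix x assume "x \<in> - D"
  then obtain n where pos: "emeasure \<mu> (A n \<inter> (\<lambda>z. x + z) ` B n) > 0"
    by (auto elim: slice_emeasure_posE)
  have "A n \<inter> (\<lambda>z. x + z) ` B n \<in> sets borel" using A B by (intro sets.Int translation_borel)
  then obtain W where W: "open W" "0 \<in> W"
    "\<And>y. y \<in> W \<Longrightarrow>
      emeasure \<mu> ((A n \<inter> (\<lambda>z. x + z) ` B n) \<inter> (\<lambda>w. y + w) ` (A n \<inter> (\<lambda>z. x + z) ` B n)) > 0"
    using pos by (rule steinhaus) (rule that)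
  have "continuous_on UNIV (\<lambda>z::'a. z - x)"
    by (intro continuous_on_group_diff continuous_on_id continuous_on_const)
  then have "open ((\<lambda>z. z - x) -` W)" by (rule open_vimage[OF W(1)])
  moreover have "x \<in> (\<lambda>z. z - x) -` W" using W(2) by simp
  moreover have "(\<lambda>z. z - x) -` W \<subseteq> - D"
  proof
    fix z assume "z \<in> (\<lambda>z. z - x) -` W"
    then have "(z - x) + x \<notin> D" by (intro translate_not_mem_if_slice_overlaps[of n x "z - x"] W(3)) simp
    then show "z \<in> - D" by simp
  qed
  ultimately show "\<exists>T. open T \<and> x \<in> T \<and> T \<subseteq> - D" by blast
qed

end

lemma closed_if_invariant_omega_closed:
  fixes \<Omega> \<Omega>' :: "('a \<times> 'a) set"
  assumes inv: "\<forall>r. (\<lambda>(s, t). (s + r, t + r)) ` \<Omega> = \<Omega>"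
    and "omega_closed \<mu> \<Omega>'" "marg_equiv \<mu> \<Omega> \<Omega>'"
  shows "closed \<Omega>"
proof -
  obtain N and A B :: "nat \<Rightarrow> 'a set" where N: "N \<in> null_sets \<mu>"
    and AB: "\<And>n. A n \<in> sets borel" "\<And>n. B n \<in> sets borel"
    and rect: "\<And>s t. s \<notin> N \<Longrightarrow> t \<notin> N \<Longrightarrow> (s, t) \<notin> \<Omega> \<longleftrightarrow> (\<exists>n. s \<in> A n \<and> t \<in> B n)"
    using assms(2,3) by (rule omega_closed_marg_equivE) (rule that)
  let ?D = "{x. (x, 0) \<in> \<Omega>}"
  have "closed ?D"
    using N AB
  proof (rule closed_difference_set)
    fix x b assume "x + b \<notin> N" "b \<notin> N"
    then show "x \<notin> ?D \<longleftrightarrow> (\<exists>n. x + b \<in> A n \<and> b \<in> B n)"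
      using rect[of "x + b" b] right_invariant_mem_iff[OF inv, of x b] by simp
  qed
  have "continuous_on UNIV (\<lambda>p::'a \<times> 'a. fst p - snd p)"
    by (intro continuous_on_group_diff continuous_on_fst continuous_on_snd continuous_on_id)
  with \<open>closed ?D\<close> have "closed ((\<lambda>p. fst p - snd p) -` ?D)" by (rule closed_vimage)
  moreover have "(\<lambda>p. fst p - snd p) -` ?D = \<Omega>"
  proof (rule set_eqI)
    fix p :: "'a \<times> 'a"
    show "p \<in> (\<lambda>p. fst p - snd p) -` ?D \<longleftrightarrow> p \<in> \<Omega>"
      using right_invariant_mem_iff[OF inv, of "fst p - snd p" "snd p"] by simp
  qed
  ultimately show ?thesis by simp
qed

end

theorem corollary3p9:
  fixes \<mu> :: "'a::{group_add, t2_space, second_countable_topology} measure"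
    and \<Omega> :: "('a \<times> 'a) set"
  assumes "locally_compact_group TYPE('a)"
    and "left_haar_measure \<mu>"
    and "\<forall>r. (\<lambda>(s, t). (s + r, t + r)) ` \<Omega> = \<Omega>"
  shows "(\<exists>\<Omega>'. omega_closed \<mu> \<Omega>' \<and> marg_equiv \<mu> \<Omega> \<Omega>') \<longleftrightarrow>
         (\<exists>\<Omega>'. closed \<Omega>' \<and> marg_equiv \<mu> \<Omega> \<Omega>')"
proof
  interpret lc_haar \<mu> using assms(1,2) by (rule lc_haar.intro)
  assume "\<exists>\<Omega>'. omega_closed \<mu> \<Omega>' \<and> marg_equiv \<mu> \<Omega> \<Omega>'"
  then have "closed \<Omega>" using closed_if_invariant_omega_closed[OF assms(3)] by blast
  then show "\<exists>\<Omega>'. closed \<Omega>' \<and> marg_equiv \<mu> \<Omega> \<Omega>'" using marg_equiv_refl by blast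
next
  assume "\<exists>\<Omega>'. closed \<Omega>' \<and> marg_equiv \<mu> \<Omega> \<Omega>'"
  then show "\<exists>\<Omega>'. omega_closed \<mu> \<Omega>' \<and> marg_equiv \<mu> \<Omega> \<Omega>'" using closed_imp_omega_closed by blast
qed

end
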